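(* Let $s\ge 2$ and let $a,b\ge 1$ be integers with $a+b\le s$. Let $C$ be a set with $|C|\ge s+1$ and let $z_1,z_2$ be two distinct elements not in $C$. Let \[ \mathcal{C}=\{\{z_1\}\cup D: D\subseteq C,\ |D|=a\}\cup\{\{z_2\}\cup E: E\subseteq C,\ |E|=b\}. \] Then $\mathcal{C}$ is non-separable.
   Context: Two families $\mathcal{A}_1,\mathcal{A}_2$ are cross-intersecting if $A_1\cap A_2\neq\emptyset$ for all $A_1\in\mathcal{A}_1$, $A_2\in\mathcal{A}_2$. A family $\mathcal{A}$ is non-separable if for every partition $\mathcal{A}=\mathcal{A}_1\cup\mathcal{A}_2$ (disjoint union) with $(\mathcal{A}_1,\mathcal{A}_2)$ cross-intersecting, we have $\mathcal{A}_1=\emptyset$ or $\mathcal{A}_2=\emptyset$. *)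

theory Defs
  imports Main
begin

definition cross_intersecting :: "'a set set \<Rightarrow> 'a set set \<Rightarrow> bool" where
  "cross_intersecting A1 A2 \<longleftrightarrow> (\<forall>X\<in>A1. \<forall>Y\<in>A2. X \<inter> Y \<noteq> {})"

definition non_separable :: "'a set set \<Rightarrow> bool" where
  "non_separable A \<longleftrightarrow>
     (\<forall>A1 A2. A1 \<union> A2 = A \<and> A1 \<inter> A2 = {} \<and> cross_intersecting A1 A2
        \<longrightarrow> A1 = {} \<or> A2 = {})"

end

theory Submission
  imports Defs
begin

text \<open>Two disjoint members of a family always lie in the same part of a cross-intersecting
partition, so it suffices that every property shared by disjoint members is constant on the
family (its disjointness graph is connected). For two \<open>a\<close>-sets \<open>D, D'\<close> differing in one
element, \<open>|C| \<ge> a + b + 1\<close> leaves room for a \<open>b\<close>-set \<open>E\<close> disjoint from \<open>D \<union> D'\<close>, so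
\<open>{z\<^sub>1} \<union> D\<close> and \<open>{z\<^sub>1} \<union> D'\<close> are both linked to \<open>{z\<^sub>2} \<union> E\<close>. Exchanging one element at a
time connects all members of the first kind, symmetrically those of the second, and a single
disjoint pair links the two kinds.\<close>

lemma cross_intersecting_partition_disjoint_same_part:
  assumes "A1 \<union> A2 = F" "A1 \<inter> A2 = {}" "cross_intersecting A1 A2"
    and "S \<in> F" "T \<in> F" "S \<inter> T = {}"
  shows "S \<in> A1 \<longleftrightarrow> T \<in> A1"
  using assms unfolding cross_intersecting_def by blast

lemma non_separable_if_disjoint_invariant_constant:
  assumes "\<And>P S T. (\<And>X Y. X \<in> F \<Longrightarrow> Y \<in> F \<Longrightarrow> X \<inter> Y = {} \<Longrightarrow> P X \<longleftrightarrow> P Y)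
             \<Longrightarrow> S \<in> F \<Longrightarrow> T \<in> F \<Longrightarrow> P S \<longleftrightarrow> P T"
  shows "non_separable F"
  unfolding non_separable_def
proof (intro allI impI)
  fix A1 A2
  assume part: "A1 \<union> A2 = F \<and> A1 \<inter> A2 = {} \<and> cross_intersecting A1 A2"
  have "S \<in> A1 \<longleftrightarrow> T \<in> A1" if "S \<in> F" "T \<in> F" for S T
  proof (rule assms[of "\<lambda>X. X \<in> A1", OF _ that])
    fix X Y
    assume "X \<in> F" "Y \<in> F" "X \<inter> Y = {}"
    with part show "X \<in> A1 \<longleftrightarrow> Y \<in> A1"
      using cross_intersecting_partition_disjoint_same_part by blast
  qed
  then show "A1 = {} \<or> A2 = {}"
    using part by blast
qed

lemma obtain_disjoint_subsets_with_card:
  assumes "finite C" "a + b \<le> card C"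
  obtains D E where "D \<subseteq> C" "card D = a" "E \<subseteq> C" "card E = b" "D \<inter> E = {}"
proof -
  obtain S where S: "S \<subseteq> C" "card S = a + b"
    using obtain_subset_with_card_n assms(2) by metis
  obtain D where D: "D \<subseteq> S" "card D = a"
    using obtain_subset_with_card_n[of a S] S(2) by auto
  have "finite S"
    using S(1) assms(1) finite_subset by blast
  then have "S - D \<subseteq> C" "card (S - D) = b" "D \<inter> (S - D) = {}"
    using D S by (auto simp: card_Diff_subset finite_subset)
  with D S that show ?thesis by blast
qed

lemma disjoint_pairing_invariant_on_subsets_eq:
  assumes "finite C" "a + b + 1 \<le> card C"
    and pair: "\<And>D E. D \<subseteq> C \<Longrightarrow> card D = a \<Longrightarrow> E \<subseteq> C \<Longrightarrow> card E = b \<Longrightarrow> D \<inter> E = {}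
                 \<Longrightarrow> P D \<longleftrightarrow> Q E"
    and "D \<subseteq> C" "card D = a" "D' \<subseteq> C" "card D' = a"
  shows "P D \<longleftrightarrow> P D'"
  using assms(4,5)
proof (induction "card (D - D')" arbitrary: D)
  case 0
  have fin: "finite D" "finite D'"
    using finite_subset[OF 0(2) assms(1)] finite_subset[OF assms(6,1)] by auto
  with 0 have "D \<subseteq> D'"
    by simp
  with fin 0(3) assms(7) have "D = D'"
    using card_subset_eq by metis
  then show ?case
    by simp
next
  case (Suc k)
  have fin: "finite D" "finite D'"
    using finite_subset[OF Suc.prems(1) assms(1)] finite_subset[OF assms(6,1)] by auto
  have "D - D' \<noteq> {}"
    using Suc.hyps(2) by force
  then obtain x where x: "x \<in> D" "x \<notin> D'"
    by blast
  have "card (D - D') \<le> card (D' - D)"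
    using card_le_sym_Diff[OF fin] Suc.prems(2) assms(7) by simp
  with Suc.hyps(2) have "D' - D \<noteq> {}"
    by force
  then obtain y where y: "y \<in> D'" "y \<notin> D"
    by blast
  define D'' where "D'' = insert y (D - {x})"
  have "0 < card D"
    using fin(1) x(1) card_gt_0_iff by blast
  then have D'': "D'' \<subseteq> C" "card D'' = a"
    using Suc.prems x y fin assms(6) by (auto simp: D''_def card_Diff_singleton)
  have "D'' - D' = (D - D') - {x}"
    using y by (auto simp: D''_def)
  then have "k = card (D'' - D')"
    using Suc.hyps(2) x by (simp add: fin)
  then have "P D'' \<longleftrightarrow> P D'"
    using Suc.hyps(1) D'' by blast
  have yD: "insert y D \<subseteq> C" "card (insert y D) = a + 1"
    using Suc.prems y fin assms(6) by auto
  then have "card (C - insert y D) = card C - (a + 1)"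
    using card_Diff_subset[OF finite_subset[OF yD(1) assms(1)] yD(1)] by simp
  then have "b \<le> card (C - insert y D)"
    using assms(2) by simp
  then obtain E where E: "E \<subseteq> C - insert y D" "card E = b"
    using obtain_subset_with_card_n by metis
  have "P D \<longleftrightarrow> Q E" "P D'' \<longleftrightarrow> Q E"
    using pair[OF Suc.prems] pair[OF D''] E by (auto simp: D''_def)
  with \<open>P D'' \<longleftrightarrow> P D'\<close> show ?case
    by simp
qed

lemma disjoint_pairing_invariant_constant:
  assumes "finite C" "a + b + 1 \<le> card C"
    and pair: "\<And>D E. D \<subseteq> C \<Longrightarrow> card D = a \<Longrightarrow> E \<subseteq> C \<Longrightarrow> card E = b \<Longrightarrow> D \<inter> E = {}
                 \<Longrightarrow> P D \<longleftrightarrow> Q E"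
    and "D \<subseteq> C" "card D = a" "E \<subseteq> C" "card E = b"
  shows "P D \<longleftrightarrow> Q E"
proof -
  have "a + b \<le> card C"
    using assms(2) by simp
  then obtain D0 E0 where D0E0: "D0 \<subseteq> C" "card D0 = a" "E0 \<subseteq> C" "card E0 = b" "D0 \<inter> E0 = {}"
    by (rule obtain_disjoint_subsets_with_card[OF assms(1)])
  have "P D \<longleftrightarrow> P D0"
    using disjoint_pairing_invariant_on_subsets_eq[OF assms(1,2) pair assms(4,5) D0E0(1,2)] .
  moreover have "Q E \<longleftrightarrow> Q E0"
  proof (rule disjoint_pairing_invariant_on_subsets_eq[of C b a Q P])
    show "b + a + 1 \<le> card C"
      using assms(2) by simp
    show "Q E' \<longleftrightarrow> P D'"
      if "E' \<subseteq> C" "card E' = b" "D' \<subseteq> C" "card D' = a" "E' \<inter> D' = {}" for E' D'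
      using pair[OF that(3,4,1,2)] that(5) by (simp add: Int_commute)
  qed (use assms(1,6,7) D0E0 in auto)
  ultimately show ?thesis
    using pair[OF D0E0] by simp
qed

theorem proposition3p2:
  fixes s a b :: nat and C :: "'a set" and z1 z2 :: 'a
  assumes "s \<ge> 2" and "a \<ge> 1" and "b \<ge> 1" and "a + b \<le> s"
    and "finite C" and "card C \<ge> s + 1"
    and "z1 \<noteq> z2" and "z1 \<notin> C" and "z2 \<notin> C"
  shows "non_separable
           ({insert z1 D | D. D \<subseteq> C \<and> card D = a} \<union>
            {insert z2 E | E. E \<subseteq> C \<and> card E = b})"
proof (rule non_separable_if_disjoint_invariant_constant)
  fix P S T
  let ?F = "{insert z1 D | D. D \<subseteq> C \<and> card D = a} \<union> {insert z2 E | E. E \<subseteq> C \<and> card E = b}"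
  assume inv: "\<And>X Y. X \<in> ?F \<Longrightarrow> Y \<in> ?F \<Longrightarrow> X \<inter> Y = {} \<Longrightarrow> P X \<longleftrightarrow> P Y"
  have card_C: "a + b + 1 \<le> card C" "a + b \<le> card C"
    using assms(4,6) by simp_all
  have link: "P (insert z1 D) \<longleftrightarrow> P (insert z2 E)"
    if "D \<subseteq> C" "card D = a" "E \<subseteq> C" "card E = b" for D E
  proof (rule disjoint_pairing_invariant_constant[OF assms(5) card_C(1) _ that])
    fix D E
    assume "D \<subseteq> C" "card D = a" "E \<subseteq> C" "card E = b" "D \<inter> E = {}"
    then show "P (insert z1 D) \<longleftrightarrow> P (insert z2 E)"
      by (intro inv) (use assms(7-9) in auto)
  qed
  obtain D0 E0 where D0: "D0 \<subseteq> C" "card D0 = a" and E0: "E0 \<subseteq> C" "card E0 = b"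
    by (rule obtain_disjoint_subsets_with_card[OF assms(5) card_C(2)])
  have first: "P (insert z1 D) \<longleftrightarrow> P (insert z1 D0)" if "D \<subseteq> C" "card D = a" for D
    using link[OF that E0] link[OF D0 E0] by simp
  have second: "P (insert z2 E) \<longleftrightarrow> P (insert z1 D0)" if "E \<subseteq> C" "card E = b" for E
    using link[OF D0 that] by simp
  assume "S \<in> ?F" "T \<in> ?F"
  then show "P S \<longleftrightarrow> P T"
    using first second by auto
qed

end
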